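(* Let $\Omega \neq \emptyset$ and let $k: \Omega \times \Omega \to \mathbb{R}$ be a reproducing kernel on $\Omega$ with corresponding reproducing kernel Hilbert space $H$. Let $\mu$ be a $\sigma$-finite measure on $\Omega$ such that $H \subset L^2(\Omega,\mu)$, and let $S: H \to L^2(\Omega,\mu)$, $f \mapsto f$, be the identical embedding (which is continuous). Define the integral operators $T_{H,H}: H \to H$, $T_{H,L^2}: H \to L^2(\Omega,\mu)$ and $T_{L^2,L^2}: L^2(\Omega,\mu) \to L^2(\Omega,\mu)$, all given by the same formula $$f \mapsto \Big( s \mapsto \int_\Omega k(s,t) f(t)\, d\mu(t)\Big).$$ Then the following conditions are equivalent: (1) $S$ is compact; (2) each of the operators $T_{H,H}$, $T_{H,L^2}$, $T_{L^2,L^2}$ is compact (equivalently, at least one of them is compact); (3) for every sequence $(f_n)_{n\in\mathbb{N}} \subset H$ which is bounded in the norm of $H$ and converges pointwise on $\Omega$ to $0$, one has $$\lim_{n\to\infty} \int_\Omega \Big( \int_\Omega k(s,t) f_n(t)\, d\mu(t)\Big)^2 d\mu(s) = 0.$$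
   Context: A reproducing kernel Hilbert space $H$ on $\Omega$ with kernel $k$ is a Hilbert space of real-valued functions on $\Omega$ such that $k(s,\cdot)\in H$ for all $s\in\Omega$ and $f(s)=\langle f, k(s,\cdot)\rangle_H$ for all $f\in H$, $s\in\Omega$. The condition $H \subset L^2(\Omega,\mu)$ means every $f\in H$ is a representative of an element of $L^2(\Omega,\mu)$; the identical embedding $S$ is then assumed to be a continuous linear operator. *)

theory Defs
  imports "HOL-Analysis.Analysis"
begin

text \<open>The RKHS H is modelled by a real Hilbert space type 'h together with the
  kernel sections feat s = k(s,.) in H; the function represented by h in 'h is
  emb feat h = (\<lambda>s. h \<bullet> feat s) (reproducing property).\<close>

definition emb :: "('a \<Rightarrow> 'h::real_inner) \<Rightarrow> 'h \<Rightarrow> 'a \<Rightarrow> real" where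
  "emb feat h = (\<lambda>s. h \<bullet> feat s)"

definition sqint :: "'a measure \<Rightarrow> ('a \<Rightarrow> real) \<Rightarrow> bool" where
  "sqint M f \<longleftrightarrow> f \<in> borel_measurable M \<and> integrable M (\<lambda>x. (f x)\<^sup>2)"

definition l2norm :: "'a measure \<Rightarrow> ('a \<Rightarrow> real) \<Rightarrow> real" where
  "l2norm M f = sqrt (\<integral>x. (f x)\<^sup>2 \<partial>M)"

definition l2_conv :: "'a measure \<Rightarrow> (nat \<Rightarrow> 'a \<Rightarrow> real) \<Rightarrow> bool" where
  "l2_conv M F \<longleftrightarrow> (\<exists>g. sqint M g \<and> (\<lambda>n. l2norm M (\<lambda>x. F n x - g x)) \<longlonglongrightarrow> 0)"

definition intop :: "'a measure \<Rightarrow> ('a \<Rightarrow> 'a \<Rightarrow> real) \<Rightarrow> ('a \<Rightarrow> real) \<Rightarrow> 'a \<Rightarrow> real" where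
  "intop M k f = (\<lambda>s. \<integral>t. k s t * f t \<partial>M)"

definition compact_S :: "'a measure \<Rightarrow> ('a \<Rightarrow> 'h::real_inner) \<Rightarrow> bool" where
  "compact_S M feat \<longleftrightarrow>
     (\<forall>h::nat \<Rightarrow> 'h. bounded (range h) \<longrightarrow>
        (\<exists>r. strict_mono r \<and> l2_conv M (\<lambda>n. emb feat (h (r n)))))"

definition compact_THH :: "'a measure \<Rightarrow> ('a \<Rightarrow> 'a \<Rightarrow> real) \<Rightarrow> ('a \<Rightarrow> 'h::real_inner) \<Rightarrow> bool" where
  "compact_THH M k feat \<longleftrightarrow>
     (\<forall>h::nat \<Rightarrow> 'h. bounded (range h) \<longrightarrow>
        (\<exists>r G g. strict_mono r \<and>
           (\<forall>n. \<forall>s\<in>space M. emb feat (G n) s = intop M k (emb feat (h (r n))) s) \<and>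
           G \<longlonglongrightarrow> g))"

definition compact_THL :: "'a measure \<Rightarrow> ('a \<Rightarrow> 'a \<Rightarrow> real) \<Rightarrow> ('a \<Rightarrow> 'h::real_inner) \<Rightarrow> bool" where
  "compact_THL M k feat \<longleftrightarrow>
     (\<forall>h::nat \<Rightarrow> 'h. bounded (range h) \<longrightarrow>
        (\<exists>r. strict_mono r \<and> l2_conv M (\<lambda>n. intop M k (emb feat (h (r n))))))"

definition compact_TLL :: "'a measure \<Rightarrow> ('a \<Rightarrow> 'a \<Rightarrow> real) \<Rightarrow> bool" where
  "compact_TLL M k \<longleftrightarrow>
     (\<forall>f::nat \<Rightarrow> 'a \<Rightarrow> real. (\<forall>n. sqint M (f n)) \<and> (\<exists>C. \<forall>n. l2norm M (f n) \<le> C) \<longrightarrow>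
        (\<exists>r. strict_mono r \<and> l2_conv M (\<lambda>n. intop M k (f (r n)))))"

end

theory Submission
  imports Defs "HOL-Library.Diagonal_Subsequence"
begin

text \<open>Write \<open>S\<close> for the embedding \<open>emb feat\<close> of \<open>H\<close> into \<open>L\<^sup>2(\<mu>)\<close> and \<open>S\<^sup>*\<close> for its
  adjoint, which exists by the Riesz representation theorem. Since \<open>k(s,\<cdot>)\<close> represents
  evaluation at \<open>s\<close>, \<open>S\<^sup>*\<close> is the integral operator with kernel \<open>k\<close>; hence
  \<open>T\<^sub>H\<^sub>,\<^sub>H = S\<^sup>*S\<close>, \<open>T\<^sub>H\<^sub>,\<^sub>L\<^sub>2 = SS\<^sup>*S\<close> and \<open>T\<^sub>L\<^sub>2\<^sub>,\<^sub>L\<^sub>2 = SS\<^sup>*\<close>.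
  Compactness of \<open>S\<close> passes to \<open>SS\<^sup>*\<close> and then to \<open>SS\<^sup>*S\<close>; from \<open>SS\<^sup>*S\<close> it passes to
  \<open>S\<^sup>*S\<close> because \<open>\<parallel>S\<^sup>*Sx\<parallel>\<^sup>2 \<le> \<parallel>Sx\<parallel> \<parallel>SS\<^sup>*Sx\<parallel>\<close>, and from \<open>S\<^sup>*S\<close> back to \<open>S\<close> because
  \<open>\<parallel>Sx\<parallel>\<^sup>2 = \<langle>S\<^sup>*Sx, x\<rangle>\<close>, applied to \<open>x = h\<^sub>n - h\<close> for a subsequence \<open>h\<^sub>n\<close> converging
  weakly to \<open>h\<close>. A bounded sequence converging pointwise to \<open>0\<close> converges weakly to \<open>0\<close>,
  since every weak limit point is orthogonal to all \<open>k(s,\<cdot>)\<close>; compactness of \<open>S\<close> makes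
  its image under \<open>S\<^sup>*S\<close> norm null, whence (3). Conversely, (3) for \<open>h\<^sub>n - h\<close> together
  with the two inequalities gives \<open>S h\<^sub>n \<rightarrow> S h\<close>.

  Every limit in \<open>L\<^sup>2\<close> that is needed is of the form \<open>S h\<close>.\<close>

lemma LIMSEQ_subsubseqI:
  fixes X :: "nat \<Rightarrow> 'a::metric_space"
  assumes "\<And>r::nat \<Rightarrow> nat. strict_mono r \<Longrightarrow> \<exists>q. strict_mono q \<and> (X \<circ> r \<circ> q) \<longlonglongrightarrow> l"
  shows "X \<longlonglongrightarrow> l"
proof (rule ccontr)
  assume "\<not> X \<longlonglongrightarrow> l"
  then obtain e where e: "e > 0" and "\<And>N. \<exists>n\<ge>N. e \<le> dist (X n) l"
    unfolding lim_sequentially by (auto simp: not_less)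
  then have "infinite {n. e \<le> dist (X n) l}"
    by (simp add: infinite_nat_iff_unbounded_le)
  then obtain r :: "nat \<Rightarrow> nat" where r: "strict_mono r" and far: "\<And>n. e \<le> dist (X (r n)) l"
    using infinite_enumerate by blast
  obtain q where "(X \<circ> r \<circ> q) \<longlonglongrightarrow> l"
    using assms[OF r] by blast
  then obtain n where "dist (X (r (q n))) l < e"
    using e unfolding lim_sequentially by fastforce
  with far[of "q n"] show False by simp
qed

lemma tendsto_zero_if_square_le:
  fixes a b :: "nat \<Rightarrow> real"
  assumes "\<And>n. 0 \<le> a n" and "\<And>n. (a n)\<^sup>2 \<le> b n" and "b \<longlonglongrightarrow> 0"
  shows "a \<longlonglongrightarrow> 0"
proof (rule real_tendsto_sandwich[of "\<lambda>_. 0" _ _ "\<lambda>n. sqrt (b n)"])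
  show "\<forall>\<^sub>F n in sequentially. a n \<le> sqrt (b n)"
    using assms by (simp add: real_le_rsqrt)
  show "(\<lambda>n. sqrt (b n)) \<longlonglongrightarrow> 0"
    using tendsto_real_sqrt[OF assms(3)] by simp
qed (use assms in auto)

lemma nonneg_quadratic_coeff_le:
  fixes a b c :: real
  assumes "0 \<le> a" and "0 \<le> c" and nonneg: "\<And>t. 0 \<le> a + 2*t*b + t\<^sup>2*c"
  shows "\<bar>b\<bar> \<le> sqrt a * sqrt c"
proof -
  have "b\<^sup>2 \<le> a*c"
  proof (cases "c = 0")
    case True
    have "b = 0"
    proof (rule ccontr)
      assume "b \<noteq> 0"
      then have "a + 2*(-(a+1)/(2*b))*b + (-(a+1)/(2*b))\<^sup>2*c = -1"
        using True by (simp add: field_simps)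
      with nonneg show False by (metis neg_0_le_iff_le not_one_le_zero)
    qed
    with assms show ?thesis by simp
  next
    case False
    with \<open>0 \<le> c\<close> have "c > 0" by simp
    have "0 \<le> c * (a + 2*(-b/c)*b + (-b/c)\<^sup>2*c)"
      using nonneg[of "-b/c"] \<open>c > 0\<close> by (intro mult_nonneg_nonneg) auto
    also have "\<dots> = a*c - b\<^sup>2"
      using \<open>c > 0\<close> by (simp add: field_simps power2_eq_square)
    finally show ?thesis by simp
  qed
  then have "sqrt (b\<^sup>2) \<le> sqrt (a*c)" by (rule real_sqrt_le_mono)
  then show ?thesis by (simp add: real_sqrt_mult)
qed

section \<open>Orthogonal projection and the Riesz representation theorem\<close>

lemma nearest_point_orthogonal:
  fixes V :: "'h::real_inner set"
  assumes "subspace V" and "p \<in> V" and "y \<in> V"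
    and nearest: "\<And>v. v \<in> V \<Longrightarrow> norm (x - p) \<le> norm (x - v)"
  shows "(x - p) \<bullet> y = 0"
proof -
  have "0 \<le> 0 + 2*t*(-((x - p) \<bullet> y)) + t\<^sup>2*(y \<bullet> y)" for t
  proof -
    have "p + t *\<^sub>R y \<in> V"
      using assms by (simp add: subspace_add subspace_scale)
    then have "(norm (x - p))\<^sup>2 \<le> (norm (x - (p + t *\<^sub>R y)))\<^sup>2"
      using nearest by (simp add: power_mono)
    also have "\<dots> = (norm (x - p))\<^sup>2 + 2*t*(-((x - p) \<bullet> y)) + t\<^sup>2*(y \<bullet> y)"
      unfolding power2_norm_eq_inner
      by (simp add: algebra_simps inner_commute power2_eq_square)
    finally show ?thesis by simp
  qed
  from nonneg_quadratic_coeff_le[OF _ _ this] show ?thesis by simp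
qed

lemma closed_subspace_nearest_point:
  fixes V :: "'h::{real_inner,complete_space} set"
  assumes "subspace V" and "closed V"
  shows "\<exists>p\<in>V. \<forall>v\<in>V. norm (x - p) \<le> norm (x - v)"
proof -
  define m where "m = (INF v\<in>V. (norm (x - v))\<^sup>2)"
  have "V \<noteq> {}"
    using \<open>subspace V\<close> subspace_0 by blast
  have bdd: "bdd_below ((\<lambda>v. (norm (x - v))\<^sup>2) ` V)"
    by (rule bdd_belowI[of _ 0]) auto
  then have m_le: "m \<le> (norm (x - v))\<^sup>2" if "v \<in> V" for v
    unfolding m_def using that by (rule cINF_lower)
  have "\<exists>v\<in>V. (norm (x - v))\<^sup>2 < m + 1 / Suc n" for n
    unfolding m_def by (intro cINF_less_iff[OF \<open>V \<noteq> {}\<close> bdd, THEN iffD1]) auto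
  then obtain v where v: "\<And>n. v n \<in> V" and near: "\<And>n. (norm (x - v n))\<^sup>2 < m + 1 / Suc n"
    by metis
  \<comment> \<open>parallelogram law, with the midpoint of \<open>v a\<close> and \<open>v b\<close> lying in \<open>V\<close>\<close>
  have close: "(norm (v a - v b))\<^sup>2 \<le> 2 / Suc a + 2 / Suc b" for a b
  proof -
    have "(1/2) *\<^sub>R (v a + v b) \<in> V"
      using v \<open>subspace V\<close> by (simp add: subspace_add subspace_scale)
    then have "m \<le> (norm (x - (1/2) *\<^sub>R (v a + v b)))\<^sup>2"
      by (rule m_le)
    moreover have "(norm (v a - v b))\<^sup>2 = 2*(norm (x - v a))\<^sup>2 + 2*(norm (x - v b))\<^sup>2
        - 4*(norm (x - (1/2) *\<^sub>R (v a + v b)))\<^sup>2"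
      unfolding power2_norm_eq_inner by (simp add: algebra_simps inner_commute)
    ultimately show ?thesis
      using near[of a] near[of b] by linarith
  qed
  have "Cauchy v"
  proof (rule metric_CauchyI)
    fix e :: real assume "e > 0"
    then obtain N :: nat where N: "4 / e\<^sup>2 < Suc N"
      using reals_Archimedean2 less_Suc_eq by (metis of_nat_Suc add.commute less_add_one order.strict_trans)
    have "dist (v a) (v b) < e" if "a \<ge> N" "b \<ge> N" for a b
    proof -
      have "2 / Suc a \<le> 2 / Suc N" "2 / Suc b \<le> 2 / Suc N"
        using that by (auto intro!: divide_left_mono)
      moreover have "4 / Suc N < e\<^sup>2"
        using N \<open>e > 0\<close> by (simp add: field_simps)
      ultimately have "(dist (v a) (v b))\<^sup>2 < e\<^sup>2"
        using close[of a b] by (simp add: dist_norm)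
      then show ?thesis
        using \<open>e > 0\<close> by (simp add: power_less_imp_less_base)
    qed
    then show "\<exists>N. \<forall>a\<ge>N. \<forall>b\<ge>N. dist (v a) (v b) < e" by blast
  qed
  then obtain p where lim: "v \<longlonglongrightarrow> p"
    using Cauchy_convergent_iff convergent_def by blast
  have "p \<in> V"
    using \<open>closed V\<close> v lim closed_sequentially by blast
  have "(\<lambda>n. (norm (x - v n))\<^sup>2) \<longlonglongrightarrow> (norm (x - p))\<^sup>2"
    by (intro tendsto_intros lim)
  moreover have "(\<lambda>n. m + 1 / Suc n) \<longlonglongrightarrow> m"
    using tendsto_add[OF tendsto_const LIMSEQ_Suc[OF lim_1_over_n], of m] by simp
  ultimately have "(norm (x - p))\<^sup>2 \<le> m"
    using near by (intro LIMSEQ_le) (auto intro: less_imp_le)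
  then have "norm (x - p) \<le> norm (x - v)" if "v \<in> V" for v
    using m_le[OF that] by (simp add: power2_le_imp_le)
  with \<open>p \<in> V\<close> show ?thesis by blast
qed

lemma orthogonal_projection_exists:
  fixes V :: "'h::{real_inner,complete_space} set"
  assumes "subspace V" and "closed V"
  shows "\<exists>p\<in>V. \<forall>y\<in>V. (x - p) \<bullet> y = 0"
  using closed_subspace_nearest_point[OF assms] nearest_point_orthogonal[OF \<open>subspace V\<close>]
  by metis

lemma riesz_representation:
  fixes \<phi> :: "'h::{real_inner,complete_space} \<Rightarrow> real"
  assumes "bounded_linear \<phi>"
  shows "\<exists>z. \<forall>y. \<phi> y = z \<bullet> y"
proof (cases "\<forall>y. \<phi> y = 0")
  case True
  then show ?thesis by (intro exI[of _ 0]) simp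
next
  case False
  then obtain w0 where "\<phi> w0 \<noteq> 0" by blast
  interpret bounded_linear \<phi> by fact
  define N where "N = {y. \<phi> y = 0}"
  have "subspace N"
    unfolding N_def subspace_def by (simp add: add scale)
  moreover have "closed N"
    unfolding N_def using assms by (intro closed_Collect_eq continuous_intros linear_continuous_on) auto
  ultimately obtain p where "p \<in> N" and orth: "\<And>y. y \<in> N \<Longrightarrow> (w0 - p) \<bullet> y = 0"
    using orthogonal_projection_exists by blast
  \<comment> \<open>\<open>w\<close> is a nonzero vector orthogonal to the kernel \<open>N\<close>; the representer is a multiple of it\<close>
  define w where "w = w0 - p"
  have "\<phi> w = \<phi> w0"
    unfolding w_def using \<open>p \<in> N\<close> by (simp add: N_def diff)
  then have "w \<bullet> w \<noteq> 0"
    using \<open>\<phi> w0 \<noteq> 0\<close> zero by fastforce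
  have "\<phi> y = ((\<phi> w / (w \<bullet> w)) *\<^sub>R w) \<bullet> y" for y
  proof -
    have "y - (\<phi> y / \<phi> w) *\<^sub>R w \<in> N"
      unfolding N_def using \<open>\<phi> w = \<phi> w0\<close> \<open>\<phi> w0 \<noteq> 0\<close> by (simp add: diff scale)
    then have "w \<bullet> (y - (\<phi> y / \<phi> w) *\<^sub>R w) = 0"
      using orth unfolding w_def by blast
    then have "w \<bullet> y = (\<phi> y / \<phi> w) * (w \<bullet> w)"
      by (simp add: inner_diff_right)
    then show ?thesis
      using \<open>w \<bullet> w \<noteq> 0\<close> \<open>\<phi> w = \<phi> w0\<close> \<open>\<phi> w0 \<noteq> 0\<close> by (simp add: field_simps)
  qed
  then show ?thesis by blast
qed

section \<open>Weak convergence\<close>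

definition weakly_tendsto :: "(nat \<Rightarrow> 'h::real_inner) \<Rightarrow> 'h \<Rightarrow> bool" where
  "weakly_tendsto X x \<longleftrightarrow> (\<forall>y. (\<lambda>n. X n \<bullet> y) \<longlonglongrightarrow> x \<bullet> y)"

lemma weakly_tendsto_subseq:
  "weakly_tendsto X x \<Longrightarrow> strict_mono r \<Longrightarrow> weakly_tendsto (X \<circ> r) x"
  unfolding weakly_tendsto_def using LIMSEQ_subseq_LIMSEQ by (fastforce simp: o_def)

lemma tendsto_imp_weakly_tendsto: "X \<longlonglongrightarrow> x \<Longrightarrow> weakly_tendsto X x"
  unfolding weakly_tendsto_def by (auto intro: tendsto_inner)

lemma weakly_tendsto_unique: "weakly_tendsto X x \<Longrightarrow> weakly_tendsto X x' \<Longrightarrow> x = x'"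
  unfolding weakly_tendsto_def by (metis LIMSEQ_unique vector_eq_rdot)

lemma subspace_inner_convergent: "subspace {y. convergent (\<lambda>n. g n \<bullet> y)}"
proof -
  have "convergent (\<lambda>n. g n \<bullet> (x + y))"
    if "convergent (\<lambda>n. g n \<bullet> x)" "convergent (\<lambda>n. g n \<bullet> y)" for x y
    using that tendsto_add unfolding convergent_def inner_add_right by blast
  moreover have "convergent (\<lambda>n. g n \<bullet> (c *\<^sub>R x))" if "convergent (\<lambda>n. g n \<bullet> x)" for c x
    using that tendsto_mult_left unfolding convergent_def inner_scaleR_right by blast
  ultimately show ?thesis
    unfolding subspace_def by (simp add: convergent_const)
qed

lemma closed_inner_convergent:
  fixes g :: "nat \<Rightarrow> 'h::real_inner"
  assumes bound: "\<And>n. norm (g n) \<le> B"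
  shows "closed {y. convergent (\<lambda>n. g n \<bullet> y)}"
proof -
  have "0 \<le> B"
    using bound[of 0] norm_ge_zero order_trans by blast
  have "Cauchy (\<lambda>n. g n \<bullet> y)" if y: "y \<in> closure {y. convergent (\<lambda>n. g n \<bullet> y)}" for y
  proof (rule metric_CauchyI)
    fix e :: real assume "e > 0"
    with \<open>0 \<le> B\<close> have "e / (3 * (B + 1)) > 0" by simp
    then obtain z where "convergent (\<lambda>n. g n \<bullet> z)" and yz: "dist z y < e / (3 * (B + 1))"
      using y unfolding closure_approachable by blast
    then obtain N where N: "\<And>a b. a \<ge> N \<Longrightarrow> b \<ge> N \<Longrightarrow> dist (g a \<bullet> z) (g b \<bullet> z) < e/3"
      using \<open>e > 0\<close> unfolding Cauchy_convergent_iff[symmetric] Cauchy_def by (meson divide_pos_pos zero_less_numeral)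
    have approx: "\<bar>g a \<bullet> y - g a \<bullet> z\<bar> \<le> e/3" for a
    proof -
      have "\<bar>g a \<bullet> y - g a \<bullet> z\<bar> \<le> norm (g a) * norm (y - z)"
        by (metis Cauchy_Schwarz_ineq2 inner_diff_right)
      also have "\<dots> \<le> B * (e / (3 * (B + 1)))"
        using bound[of a] yz \<open>0 \<le> B\<close> by (intro mult_mono) (auto simp: dist_norm norm_minus_commute)
      also have "\<dots> \<le> e/3"
        using \<open>0 \<le> B\<close> \<open>e > 0\<close> by (simp add: field_simps)
      finally show ?thesis .
    qed
    have "dist (g a \<bullet> y) (g b \<bullet> y) < e" if "a \<ge> N" "b \<ge> N" for a b
      using N[OF that] approx[of a] approx[of b] unfolding dist_real_def by linarith
    then show "\<exists>N. \<forall>a\<ge>N. \<forall>b\<ge>N. dist (g a \<bullet> y) (g b \<bullet> y) < e" by blast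
  qed
  then show ?thesis
    by (metis (mono_tags) Cauchy_convergent_iff closure_subset_eq mem_Collect_eq subsetI)
qed

lemma inner_convergent_diagonal_subseq:
  fixes h :: "nat \<Rightarrow> 'h::real_inner"
  assumes bound: "\<And>n. norm (h n) \<le> B"
  shows "\<exists>r. strict_mono r \<and> (\<forall>m. convergent (\<lambda>n. h (r n) \<bullet> h m))"
proof -
  interpret subseqs "\<lambda>m s. convergent (\<lambda>n. h (s n) \<bullet> h m)"
  proof
    fix m and s :: "nat \<Rightarrow> nat"
    have "norm (h (s n) \<bullet> h m) \<le> B * norm (h m)" for n
      using Cauchy_Schwarz_ineq2[of "h (s n)" "h m"] bound[of "s n"]
      by (simp add: mult_right_mono order_trans)
    then have "bounded (range (\<lambda>n. h (s n) \<bullet> h m))"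
      unfolding bounded_iff by blast
    then obtain l r' where "strict_mono r'" "((\<lambda>n. h (s n) \<bullet> h m) \<circ> r') \<longlonglongrightarrow> l"
      using bounded_imp_convergent_subsequence by blast
    then show "\<exists>r'. strict_mono r' \<and> convergent (\<lambda>n. h ((s \<circ> r') n) \<bullet> h m)"
      by (auto simp: convergent_def o_def)
  qed
  have "convergent (\<lambda>n. h (diagseq n) \<bullet> h m)" for m
  proof -
    have "convergent (\<lambda>n. h ((diagseq \<circ> (+) (Suc m)) n) \<bullet> h m)"
    proof (rule diagseq_holds)
      fix r s n assume "strict_mono (r :: nat \<Rightarrow> nat)" "convergent (\<lambda>i. h (s i) \<bullet> h n)"
      from convergent_subseq_convergent[OF this(2,1)]
      show "convergent (\<lambda>i. h ((s \<circ> r) i) \<bullet> h n)" by (simp add: o_def)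
    qed
    then obtain l where "(\<lambda>n. h (diagseq (n + Suc m)) \<bullet> h m) \<longlonglongrightarrow> l"
      unfolding convergent_def by (auto simp: o_def add.commute)
    from LIMSEQ_offset[OF this] show ?thesis
      unfolding convergent_def by blast
  qed
  then show ?thesis using subseq_diagseq by blast
qed

lemma inner_convergent_imp_weakly_tendsto:
  fixes g :: "nat \<Rightarrow> 'h::{real_inner,complete_space}"
  assumes bound: "\<And>n. norm (g n) \<le> B" and conv: "\<And>y. convergent (\<lambda>n. g n \<bullet> y)"
  shows "\<exists>x. weakly_tendsto g x"
proof -
  define \<psi> where "\<psi> y = lim (\<lambda>n. g n \<bullet> y)" for y
  have lim: "(\<lambda>n. g n \<bullet> y) \<longlonglongrightarrow> \<psi> y" for y
    unfolding \<psi>_def using conv convergent_LIMSEQ_iff by blast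
  have "bounded_linear \<psi>"
  proof (rule bounded_linear_intro)
    fix x y
    show "\<psi> (x + y) = \<psi> x + \<psi> y"
      using lim[of "x + y"] tendsto_add[OF lim[of x] lim[of y]]
      unfolding inner_add_right by (rule LIMSEQ_unique)
  next
    fix c :: real and x
    show "\<psi> (c *\<^sub>R x) = c *\<^sub>R \<psi> x"
      using lim[of "c *\<^sub>R x"] tendsto_mult_left[OF lim[of x], of c]
      unfolding inner_scaleR_right real_scaleR_def by (rule LIMSEQ_unique)
  next
    fix x
    have "\<bar>g n \<bullet> x\<bar> \<le> norm x * B" for n
      using Cauchy_Schwarz_ineq2[of "g n" x] mult_left_mono[OF bound[of n], of "norm x"]
      by (simp add: mult.commute)
    then have "\<bar>\<psi> x\<bar> \<le> norm x * B"
      by (intro LIMSEQ_le_const2[OF tendsto_rabs[OF lim]]) auto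
    then show "norm (\<psi> x) \<le> norm x * B" by simp
  qed
  then obtain x where "\<And>y. \<psi> y = x \<bullet> y"
    using riesz_representation by blast
  then show ?thesis
    unfolding weakly_tendsto_def using lim by metis
qed

lemma bounded_imp_weakly_convergent_subseq:
  fixes h :: "nat \<Rightarrow> 'h::{real_inner,complete_space}"
  assumes "bounded (range h)"
  shows "\<exists>r x. strict_mono r \<and> weakly_tendsto (h \<circ> r) x"
proof -
  obtain B where bound: "\<And>n. norm (h n) \<le> B"
    using assms by (auto simp: bounded_iff)
  obtain r where r: "strict_mono r" and conv_h: "\<And>m. convergent (\<lambda>n. h (r n) \<bullet> h m)"
    using inner_convergent_diagonal_subseq[of h B] bound by blast
  define V where "V = {y. convergent (\<lambda>n. h (r n) \<bullet> y)}"
  have "subspace V"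
    unfolding V_def by (rule subspace_inner_convergent)
  have "closed V"
    unfolding V_def by (rule closed_inner_convergent) (rule bound)
  \<comment> \<open>each \<open>y\<close> differs from some element of \<open>V\<close> by a vector orthogonal to all \<open>h n\<close>\<close>
  have "convergent (\<lambda>n. h (r n) \<bullet> y)" for y
  proof -
    obtain p where "p \<in> V" and orth: "\<And>v. v \<in> V \<Longrightarrow> (y - p) \<bullet> v = 0"
      using orthogonal_projection_exists[OF \<open>subspace V\<close> \<open>closed V\<close>] by blast
    have "h (r n) \<bullet> y = h (r n) \<bullet> p" for n
      using orth[of "h (r n)"] conv_h[of "r n"]
      by (simp add: V_def inner_diff_left inner_commute)
    with \<open>p \<in> V\<close> show ?thesis
      unfolding V_def by simp
  qed
  then obtain x where "weakly_tendsto (h \<circ> r) x"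
    using inner_convergent_imp_weakly_tendsto[of "h \<circ> r" B] bound by auto
  with r show ?thesis by blast
qed

section \<open>Square integrable functions\<close>

lemma sqint_integrable_mult:
  assumes "sqint M f" and "sqint M g"
  shows "integrable M (\<lambda>x. f x * g x)"
proof (rule Bochner_Integration.integrable_bound)
  show "integrable M (\<lambda>x. (f x)\<^sup>2 + (g x)\<^sup>2)"
    using assms unfolding sqint_def by auto
  show "(\<lambda>x. f x * g x) \<in> borel_measurable M"
    using assms unfolding sqint_def by auto
  have "2 * \<bar>f x * g x\<bar> \<le> (f x)\<^sup>2 + (g x)\<^sup>2" for x
    using sum_squares_bound[of "\<bar>f x\<bar>" "\<bar>g x\<bar>"] by (simp add: abs_mult)
  then have "\<bar>f x * g x\<bar> \<le> (f x)\<^sup>2 + (g x)\<^sup>2" for x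
    using abs_ge_zero[of "f x * g x"] by (smt (verit))
  then show "AE x in M. norm (f x * g x) \<le> norm ((f x)\<^sup>2 + (g x)\<^sup>2)"
    by (intro AE_I2) simp
qed

lemma sqint_diff:
  assumes "sqint M f" and "sqint M g"
  shows "sqint M (\<lambda>x. f x - g x)"
proof -
  have "(\<lambda>x. (f x - g x)\<^sup>2) = (\<lambda>x. (f x)\<^sup>2 - 2 * (f x * g x) + (g x)\<^sup>2)"
    by (simp add: power2_diff algebra_simps)
  then show ?thesis
    using assms sqint_integrable_mult[OF assms] unfolding sqint_def by auto
qed

lemma l2norm_nonneg: "0 \<le> l2norm M f"
  unfolding l2norm_def by simp

lemma l2norm_sq: "(l2norm M f)\<^sup>2 = (\<integral>x. (f x)\<^sup>2 \<partial>M)"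
  unfolding l2norm_def by simp

lemma l2norm_cong: "(\<And>x. x \<in> space M \<Longrightarrow> f x = g x) \<Longrightarrow> l2norm M f = l2norm M g"
  unfolding l2norm_def by (simp cong: Bochner_Integration.integral_cong)

lemma l2norm_diff_commute: "l2norm M (\<lambda>x. f x - g x) = l2norm M (\<lambda>x. g x - f x)"
  unfolding l2norm_def by (simp add: power2_commute)

lemma integral_square_add_scaled:
  assumes "sqint M f" and "sqint M g"
  shows "(\<integral>x. (f x + t * g x)\<^sup>2 \<partial>M)
    = (l2norm M f)\<^sup>2 + 2*t*(\<integral>x. f x * g x \<partial>M) + t\<^sup>2 * (l2norm M g)\<^sup>2"
proof -
  have expand: "(f x + t * g x)\<^sup>2 = (f x)\<^sup>2 + (2*t) * (f x * g x) + t\<^sup>2 * (g x)\<^sup>2" for x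
    by (simp add: algebra_simps power2_eq_square)
  have "integrable M (\<lambda>x. (f x)\<^sup>2)" "integrable M (\<lambda>x. (g x)\<^sup>2)" "integrable M (\<lambda>x. f x * g x)"
    using assms sqint_integrable_mult[OF assms] unfolding sqint_def by auto
  then show ?thesis
    unfolding expand l2norm_sq by simp
qed

lemma l2_Cauchy_Schwarz:
  assumes "sqint M f" and "sqint M g"
  shows "\<bar>\<integral>x. f x * g x \<partial>M\<bar> \<le> l2norm M f * l2norm M g"
proof -
  have "0 \<le> (l2norm M f)\<^sup>2 + 2*t*(\<integral>x. f x * g x \<partial>M) + t\<^sup>2 * (l2norm M g)\<^sup>2" for t
  proof -
    have "0 \<le> (\<integral>x. (f x + t * g x)\<^sup>2 \<partial>M)" by simp
    then show ?thesis using integral_square_add_scaled[OF assms, of t] by simp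
  qed
  from nonneg_quadratic_coeff_le[OF _ _ this] show ?thesis
    by (simp add: l2norm_nonneg)
qed

lemma l2norm_add_le:
  assumes "sqint M f" and "sqint M g"
  shows "l2norm M (\<lambda>x. f x + g x) \<le> l2norm M f + l2norm M g"
proof -
  have "(l2norm M (\<lambda>x. f x + g x))\<^sup>2 = (l2norm M f)\<^sup>2 + 2*(\<integral>x. f x * g x \<partial>M) + (l2norm M g)\<^sup>2"
    using integral_square_add_scaled[OF assms, of 1] by (simp add: l2norm_sq)
  also have "\<dots> \<le> (l2norm M f + l2norm M g)\<^sup>2"
    using l2_Cauchy_Schwarz[OF assms] by (simp add: power2_sum)
  finally show ?thesis
    by (meson add_nonneg_nonneg l2norm_nonneg power2_le_imp_le)
qed

lemma l2norm_triangle: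
  assumes "sqint M f" and "sqint M g" and "sqint M h"
  shows "l2norm M (\<lambda>x. f x - h x) \<le> l2norm M (\<lambda>x. f x - g x) + l2norm M (\<lambda>x. g x - h x)"
  using l2norm_add_le[OF sqint_diff[OF assms(1,2)] sqint_diff[OF assms(2,3)]] by simp

lemma l2_conv_cong:
  assumes "\<And>n x. x \<in> space M \<Longrightarrow> F n x = G n x"
  shows "l2_conv M F \<longleftrightarrow> l2_conv M G"
proof -
  have "l2norm M (\<lambda>x. F n x - g x) = l2norm M (\<lambda>x. G n x - g x)" for n g
    using assms by (intro l2norm_cong) simp
  then show ?thesis
    unfolding l2_conv_def by simp
qed

lemma l2_conv_imp_Cauchy:
  assumes "l2_conv M F" and "\<And>n. sqint M (F n)" and "e > 0"
  shows "\<exists>N. \<forall>a\<ge>N. \<forall>b\<ge>N. l2norm M (\<lambda>x. F a x - F b x) < e"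
proof -
  obtain g where "sqint M g" and lim: "(\<lambda>n. l2norm M (\<lambda>x. F n x - g x)) \<longlonglongrightarrow> 0"
    using assms(1) unfolding l2_conv_def by blast
  then have "\<forall>\<^sub>F n in sequentially. l2norm M (\<lambda>x. F n x - g x) < e/2"
    using \<open>e > 0\<close> by (intro order_tendstoD(2)) auto
  then obtain N where N: "\<And>n. n \<ge> N \<Longrightarrow> l2norm M (\<lambda>x. F n x - g x) < e/2"
    unfolding eventually_sequentially by blast
  have "l2norm M (\<lambda>x. F a x - F b x) < e" if "a \<ge> N" "b \<ge> N" for a b
    using l2norm_triangle[OF assms(2) \<open>sqint M g\<close> assms(2), of a b] N[OF that(1)] N[OF that(2)]
    by (simp add: l2norm_diff_commute[of M g])
  then show ?thesis by blast
qed

section \<open>The embedding, its adjoint and the integral operators\<close>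

lemma emb_diff: "emb feat (a - b) s = emb feat a s - emb feat b s"
  unfolding emb_def by (simp add: inner_diff_left)

lemma weakly_tendsto_emb: "weakly_tendsto X x \<Longrightarrow> (\<lambda>n. emb feat (X n) s) \<longlonglongrightarrow> emb feat x s"
  unfolding weakly_tendsto_def emb_def by blast

locale rkhs_in_L2 =
  fixes M :: "'a measure" and k :: "'a \<Rightarrow> 'a \<Rightarrow> real"
    and feat :: "'a \<Rightarrow> 'h::{real_inner, complete_space}" and C :: real
  assumes kernel: "\<And>s t. s \<in> space M \<Longrightarrow> t \<in> space M \<Longrightarrow> k s t = emb feat (feat s) t"
    and inj_emb: "\<And>h. (\<forall>s\<in>space M. emb feat h s = 0) \<Longrightarrow> h = 0"
    and in_L2: "\<And>h. sqint M (emb feat h)"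
    and C_nonneg: "0 \<le> C"
    and S_bound: "\<And>h. l2norm M (emb feat h) \<le> C * norm h"
begin

definition adj :: "('a \<Rightarrow> real) \<Rightarrow> 'h" where
  "adj g = (SOME z. \<forall>y. z \<bullet> y = (\<integral>t. g t * emb feat y t \<partial>M))"

lemma adj_inner:
  assumes g: "sqint M g"
  shows "adj g \<bullet> y = (\<integral>t. g t * emb feat y t \<partial>M)"
proof -
  have int: "integrable M (\<lambda>t. g t * emb feat y t)" for y
    using sqint_integrable_mult[OF g in_L2] .
  have "bounded_linear (\<lambda>y. \<integral>t. g t * emb feat y t \<partial>M)"
  proof (rule bounded_linear_intro)
    fix x y
    show "(\<integral>t. g t * emb feat (x + y) t \<partial>M)
        = (\<integral>t. g t * emb feat x t \<partial>M) + (\<integral>t. g t * emb feat y t \<partial>M)"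
      using int[of x] int[of y] by (simp add: emb_def inner_add_left distrib_left)
  next
    fix c :: real and x
    show "(\<integral>t. g t * emb feat (c *\<^sub>R x) t \<partial>M) = c *\<^sub>R (\<integral>t. g t * emb feat x t \<partial>M)"
      by (simp add: emb_def mult.left_commute)
  next
    fix x
    have "\<bar>\<integral>t. g t * emb feat x t \<partial>M\<bar> \<le> l2norm M g * l2norm M (emb feat x)"
      by (rule l2_Cauchy_Schwarz[OF g in_L2])
    also have "\<dots> \<le> l2norm M g * (C * norm x)"
      by (intro mult_left_mono S_bound l2norm_nonneg)
    finally show "norm (\<integral>t. g t * emb feat x t \<partial>M) \<le> norm x * (l2norm M g * C)"
      by (simp add: ac_simps)
  qed
  then have "\<exists>z. \<forall>y. z \<bullet> y = (\<integral>t. g t * emb feat y t \<partial>M)"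
    by (metis riesz_representation)
  then show ?thesis
    unfolding adj_def by (rule someI2_ex) blast
qed

lemma emb_adj:
  assumes "sqint M g" and "s \<in> space M"
  shows "emb feat (adj g) s = intop M k g s"
proof -
  have "emb feat (adj g) s = (\<integral>t. g t * emb feat (feat s) t \<partial>M)"
    using adj_inner[OF assms(1)] by (simp add: emb_def)
  also have "\<dots> = (\<integral>t. k s t * g t \<partial>M)"
    using assms(2) kernel by (intro Bochner_Integration.integral_cong) auto
  finally show ?thesis
    by (simp add: intop_def)
qed

lemma norm_adj_le:
  assumes "sqint M g"
  shows "norm (adj g) \<le> C * l2norm M g"
proof -
  have "(norm (adj g))\<^sup>2 = (\<integral>t. g t * emb feat (adj g) t \<partial>M)"
    by (simp add: power2_norm_eq_inner adj_inner[OF assms])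
  also have "\<dots> \<le> l2norm M g * l2norm M (emb feat (adj g))"
    using l2_Cauchy_Schwarz[OF assms in_L2] by (rule abs_le_D1)
  also have "\<dots> \<le> (C * l2norm M g) * norm (adj g)"
    using mult_left_mono[OF S_bound[of "adj g"] l2norm_nonneg[of M g]] by (simp add: ac_simps)
  finally have "norm (adj g) * norm (adj g) \<le> (C * l2norm M g) * norm (adj g)"
    by (simp add: power2_eq_square)
  then show ?thesis
    using C_nonneg l2norm_nonneg[of M g] by (cases "adj g = 0") (auto simp: mult_le_cancel_right)
qed

lemma adj_diff:
  assumes "sqint M f" and "sqint M g"
  shows "adj (\<lambda>x. f x - g x) = adj f - adj g"
proof -
  have "adj (\<lambda>x. f x - g x) \<bullet> y = (adj f - adj g) \<bullet> y" for y
    using sqint_integrable_mult[OF assms(1) in_L2] sqint_integrable_mult[OF assms(2) in_L2]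
    by (simp add: adj_inner assms sqint_diff inner_diff_left left_diff_distrib)
  then show ?thesis
    using vector_eq_rdot by blast
qed

definition T :: "'h \<Rightarrow> 'h" where
  "T x = adj (emb feat x)"

lemma T_inner: "T x \<bullet> y = (\<integral>t. emb feat x t * emb feat y t \<partial>M)"
  unfolding T_def by (rule adj_inner[OF in_L2])

lemma T_symmetric: "T x \<bullet> y = x \<bullet> T y"
  by (simp add: T_inner inner_commute[of x] mult.commute)

lemma T_diff: "T (a - b) = T a - T b"
  unfolding T_def using adj_diff[OF in_L2 in_L2] by (simp add: emb_diff[abs_def])

lemma T_0: "T 0 = 0"
  using T_diff[of 0 0] by simp

lemma emb_T: "s \<in> space M \<Longrightarrow> emb feat (T x) s = intop M k (emb feat x) s"
  unfolding T_def by (rule emb_adj[OF in_L2])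

lemma l2norm_emb_sq: "(l2norm M (emb feat x))\<^sup>2 = T x \<bullet> x"
  using l2norm_sq[of M "emb feat x"] T_inner[of x x] by (simp add: power2_eq_square)

lemma norm_T_sq_le: "(norm (T x))\<^sup>2 \<le> l2norm M (emb feat x) * l2norm M (emb feat (T x))"
  using l2_Cauchy_Schwarz[OF in_L2 in_L2, of x "T x"]
  by (simp add: power2_norm_eq_inner T_inner)

lemma integral_intop_sq: "(\<integral>s. (intop M k (emb feat x) s)\<^sup>2 \<partial>M) = (l2norm M (emb feat (T x)))\<^sup>2"
  unfolding l2norm_sq by (intro Bochner_Integration.integral_cong) (auto simp: emb_T)

lemma weakly_tendsto_T: "weakly_tendsto X x \<Longrightarrow> weakly_tendsto (\<lambda>n. T (X n)) (T x)"
  unfolding weakly_tendsto_def by (simp add: T_symmetric)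

lemma pointwise_null_imp_weakly_null:
  assumes bounded: "bounded (range h)"
    and null: "\<forall>s\<in>space M. (\<lambda>n. emb feat (h n) s) \<longlonglongrightarrow> 0"
  shows "weakly_tendsto h 0"
  unfolding weakly_tendsto_def inner_zero_left
proof
  fix y
  show "(\<lambda>n. h n \<bullet> y) \<longlonglongrightarrow> 0"
  proof (rule LIMSEQ_subsubseqI)
    fix r :: "nat \<Rightarrow> nat" assume r: "strict_mono r"
    have "bounded (range (h \<circ> r))"
      by (rule bounded_subset[OF bounded]) auto
    then obtain q x where q: "strict_mono q" and wx: "weakly_tendsto (h \<circ> r \<circ> q) x"
      using bounded_imp_weakly_convergent_subseq by blast
    have "x = 0"
    proof (rule inj_emb, intro ballI)
      fix s assume "s \<in> space M"
      then have "((\<lambda>n. emb feat (h n) s) \<circ> (r \<circ> q)) \<longlonglongrightarrow> 0"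
        using null LIMSEQ_subseq_LIMSEQ strict_mono_o[OF r q] by blast
      with weakly_tendsto_emb[OF wx] show "emb feat x s = 0"
        using LIMSEQ_unique by (fastforce simp: o_def)
    qed
    with q wx show "\<exists>q. strict_mono q \<and> ((\<lambda>n. h n \<bullet> y) \<circ> r \<circ> q) \<longlonglongrightarrow> 0"
      unfolding weakly_tendsto_def by (auto simp: o_def)
  qed
qed

lemma l2_conv_emb_if_T_tendsto:
  assumes "bounded (range h)" and "(\<lambda>n. T (h n)) \<longlonglongrightarrow> T x"
  shows "l2_conv M (\<lambda>n. emb feat (h n))"
proof -
  obtain B where B: "\<And>n. norm (h n) \<le> B"
    using assms(1) by (auto simp: bounded_iff)
  have "(\<lambda>n. norm (T (h n - x))) \<longlonglongrightarrow> 0"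
    using tendsto_norm_zero[OF LIM_zero[OF assms(2)]] by (simp add: T_diff)
  then have lim: "(\<lambda>n. norm (T (h n - x)) * (B + norm x)) \<longlonglongrightarrow> 0"
    by (rule tendsto_mult_left_zero)
  have "(l2norm M (emb feat (h n - x)))\<^sup>2 \<le> norm (T (h n - x)) * (B + norm x)" for n
  proof -
    have "norm (h n - x) \<le> B + norm x"
      using B[of n] norm_triangle_ineq4[of "h n" x] by linarith
    have "(l2norm M (emb feat (h n - x)))\<^sup>2 \<le> norm (T (h n - x)) * norm (h n - x)"
      unfolding l2norm_emb_sq by (metis Cauchy_Schwarz_ineq2 abs_le_D1)
    also have "\<dots> \<le> norm (T (h n - x)) * (B + norm x)"
      using \<open>norm (h n - x) \<le> B + norm x\<close> by (rule mult_left_mono) simp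
    finally show ?thesis .
  qed
  from tendsto_zero_if_square_le[OF l2norm_nonneg this lim]
  have "(\<lambda>n. l2norm M (emb feat (h n - x))) \<longlonglongrightarrow> 0" .
  then show ?thesis
    unfolding l2_conv_def using in_L2 by (auto simp: emb_diff[abs_def])
qed

lemma compact_S_imp_compact_TLL:
  assumes "compact_S M feat"
  shows "compact_TLL M k"
  unfolding compact_TLL_def
proof (intro allI impI)
  fix f :: "nat \<Rightarrow> 'a \<Rightarrow> real"
  assume "(\<forall>n. sqint M (f n)) \<and> (\<exists>C. \<forall>n. l2norm M (f n) \<le> C)"
  then obtain B where f: "\<And>n. sqint M (f n)" and B: "\<And>n. l2norm M (f n) \<le> B"
    by blast
  have "norm (adj (f n)) \<le> C * B" for n
    using norm_adj_le[OF f] mult_left_mono[OF B C_nonneg] order_trans by blast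
  then have "bounded (range (\<lambda>n. adj (f n)))"
    unfolding bounded_iff by blast
  then obtain r where "strict_mono r" and "l2_conv M (\<lambda>n. emb feat (adj (f (r n))))"
    using assms unfolding compact_S_def by blast
  moreover have "l2_conv M (\<lambda>n. emb feat (adj (f (r n)))) \<longleftrightarrow> l2_conv M (\<lambda>n. intop M k (f (r n)))"
    by (rule l2_conv_cong) (simp add: emb_adj[OF f])
  ultimately show "\<exists>r. strict_mono r \<and> l2_conv M (\<lambda>n. intop M k (f (r n)))"
    by blast
qed

lemma compact_TLL_imp_compact_THL:
  assumes "compact_TLL M k"
  shows "compact_THL M k feat"
  unfolding compact_THL_def
proof (intro allI impI)
  fix h :: "nat \<Rightarrow> 'h" assume "bounded (range h)"
  then obtain B where "\<And>n. norm (h n) \<le> B"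
    by (auto simp: bounded_iff)
  then have "l2norm M (emb feat (h n)) \<le> C * B" for n
    using S_bound mult_left_mono[OF _ C_nonneg] order_trans by blast
  with assms[unfolded compact_TLL_def, rule_format, of "\<lambda>n. emb feat (h n)"] in_L2
  show "\<exists>r. strict_mono r \<and> l2_conv M (\<lambda>n. intop M k (emb feat (h (r n))))"
    by blast
qed

lemma compact_THL_imp_compact_THH:
  assumes "compact_THL M k feat"
  shows "compact_THH M k feat"
  unfolding compact_THH_def
proof (intro allI impI)
  fix h :: "nat \<Rightarrow> 'h" assume "bounded (range h)"
  then obtain B where "B > 0" and B: "\<And>n. norm (h n) \<le> B"
    by (auto simp: bounded_pos)
  obtain r where r: "strict_mono r" and "l2_conv M (\<lambda>n. intop M k (emb feat (h (r n))))"
    using assms \<open>bounded (range h)\<close> unfolding compact_THL_def by blast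
  moreover define G where "G n = T (h (r n))" for n
  ultimately have conv: "l2_conv M (\<lambda>n. emb feat (G n))"
    by (subst l2_conv_cong) (auto simp: emb_T)
  \<comment> \<open>\<open>\<parallel>T d\<parallel>\<^sup>2 = \<langle>S d, S T d\<rangle>\<close>, so \<open>G\<close> is Cauchy in \<open>H\<close> because \<open>S \<circ> G\<close> is Cauchy in \<open>L\<^sup>2\<close>\<close>
  have G_close: "(norm (G a - G b))\<^sup>2 \<le> (2 * C * B) * l2norm M (\<lambda>s. emb feat (G a) s - emb feat (G b) s)"
    for a b
  proof -
    define d where "d = h (r a) - h (r b)"
    have "norm d \<le> 2 * B"
      using B[of "r a"] B[of "r b"] norm_triangle_ineq4[of "h (r a)" "h (r b)"] unfolding d_def by linarith
    then have Sd: "l2norm M (emb feat d) \<le> 2 * C * B"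
      using order_trans[OF S_bound[of d] mult_left_mono[OF \<open>norm d \<le> 2 * B\<close> C_nonneg]]
      by (simp add: ac_simps)
    have "T d = G a - G b"
      unfolding G_def d_def by (simp add: T_diff)
    have "(norm (G a - G b))\<^sup>2 \<le> l2norm M (emb feat d) * l2norm M (emb feat (T d))"
      using norm_T_sq_le[of d] \<open>T d = G a - G b\<close> by simp
    also have "\<dots> \<le> (2 * C * B) * l2norm M (emb feat (T d))"
      using Sd by (rule mult_right_mono) (rule l2norm_nonneg)
    finally show ?thesis
      using \<open>T d = G a - G b\<close> by (simp add: emb_diff[abs_def])
  qed
  have "Cauchy G"
  proof (rule metric_CauchyI)
    fix e :: real assume "e > 0"
    moreover have K_pos: "2 * C * B + 1 > 0"
      using C_nonneg \<open>B > 0\<close> by (intro add_nonneg_pos mult_nonneg_nonneg) auto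
    ultimately have "e\<^sup>2 / (2 * C * B + 1) > 0"
      by simp
    then obtain N where N: "\<And>a b. a \<ge> N \<Longrightarrow> b \<ge> N
        \<Longrightarrow> l2norm M (\<lambda>s. emb feat (G a) s - emb feat (G b) s) < e\<^sup>2 / (2 * C * B + 1)"
      using l2_conv_imp_Cauchy[OF conv in_L2] by blast
    have "dist (G a) (G b) < e" if "a \<ge> N" "b \<ge> N" for a b
    proof -
      have "(dist (G a) (G b))\<^sup>2 \<le> (2 * C * B + 1) * l2norm M (\<lambda>s. emb feat (G a) s - emb feat (G b) s)"
        using G_close[of a b] l2norm_nonneg[of M "\<lambda>s. emb feat (G a) s - emb feat (G b) s"]
        by (simp add: dist_norm distrib_right)
      also have "\<dots> < e\<^sup>2"
        using N[OF that] pos_less_divide_eq[OF K_pos] by (simp add: mult.commute)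
      finally show ?thesis
        using \<open>e > 0\<close> by (simp add: power_less_imp_less_base)
    qed
    then show "\<exists>N. \<forall>a\<ge>N. \<forall>b\<ge>N. dist (G a) (G b) < e" by blast
  qed
  then obtain g where "G \<longlonglongrightarrow> g"
    using Cauchy_convergent_iff convergent_def by blast
  moreover have "\<forall>n. \<forall>s\<in>space M. emb feat (G n) s = intop M k (emb feat (h (r n))) s"
    unfolding G_def by (simp add: emb_T)
  ultimately show "\<exists>r G g. strict_mono r \<and>
      (\<forall>n. \<forall>s\<in>space M. emb feat (G n) s = intop M k (emb feat (h (r n))) s) \<and> G \<longlonglongrightarrow> g"
    using r by blast
qed

lemma compact_THH_imp_compact_S:
  assumes "compact_THH M k feat"
  shows "compact_S M feat"
  unfolding compact_S_def
proof (intro allI impI)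
  fix h :: "nat \<Rightarrow> 'h" assume "bounded (range h)"
  then obtain r G g where r: "strict_mono r" and G: "\<And>n. \<forall>s\<in>space M. emb feat (G n) s = intop M k (emb feat (h (r n))) s"
    and "G \<longlonglongrightarrow> g"
    using assms unfolding compact_THH_def by blast
  have G_eq: "G n = T (h (r n))" for n
    using inj_emb[of "G n - T (h (r n))"] G by (simp add: emb_diff emb_T)
  have "bounded (range (h \<circ> r))"
    by (rule bounded_subset[OF \<open>bounded (range h)\<close>]) auto
  then obtain q x where q: "strict_mono q" and wx: "weakly_tendsto (h \<circ> r \<circ> q) x"
    using bounded_imp_weakly_convergent_subseq by blast
  have lim: "(\<lambda>n. T ((h \<circ> r \<circ> q) n)) \<longlonglongrightarrow> g"
    using LIMSEQ_subseq_LIMSEQ[OF \<open>G \<longlonglongrightarrow> g\<close> q] by (simp add: G_eq o_def)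
  \<comment> \<open>the norm limit of \<open>T \<circ> h\<close> must agree with its weak limit \<open>T x\<close>\<close>
  then have "g = T x"
    using weakly_tendsto_unique[OF tendsto_imp_weakly_tendsto weakly_tendsto_T[OF wx]] by blast
  have "bounded (range (h \<circ> r \<circ> q))"
    by (rule bounded_subset[OF \<open>bounded (range h)\<close>]) auto
  from l2_conv_emb_if_T_tendsto[OF this] lim \<open>g = T x\<close>
  have "l2_conv M (\<lambda>n. emb feat (h ((r \<circ> q) n)))"
    by (simp add: o_def)
  with strict_mono_o[OF r q] show "\<exists>r. strict_mono r \<and> l2_conv M (\<lambda>n. emb feat (h (r n)))"
    by blast
qed

lemma compact_S_imp_intop_sq_tendsto_zero:
  assumes "compact_S M feat" and "bounded (range h)"
    and "\<forall>s\<in>space M. (\<lambda>n. emb feat (h n) s) \<longlonglongrightarrow> 0"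
  shows "(\<lambda>n. \<integral>s. (intop M k (emb feat (h n)) s)\<^sup>2 \<partial>M) \<longlonglongrightarrow> 0"
proof -
  have weak_null: "weakly_tendsto h 0"
    using pointwise_null_imp_weakly_null assms(2,3) by blast
  have "(\<lambda>n. T (h n)) \<longlonglongrightarrow> 0"
  proof (rule LIMSEQ_subsubseqI)
    fix r :: "nat \<Rightarrow> nat" assume r: "strict_mono r"
    have "bounded (range (h \<circ> r))"
      by (rule bounded_subset[OF assms(2)]) auto
    from assms(1)[unfolded compact_S_def, rule_format, OF this]
    obtain q where q: "strict_mono q" and "l2_conv M (\<lambda>n. emb feat (h (r (q n))))"
      by auto
    then obtain g where "sqint M g"
      and conv: "(\<lambda>n. l2norm M (\<lambda>s. emb feat (h (r (q n))) s - g s)) \<longlonglongrightarrow> 0"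
      unfolding l2_conv_def by blast
    have "norm (T (h (r (q n))) - adj g) \<le> C * l2norm M (\<lambda>s. emb feat (h (r (q n))) s - g s)" for n
      using norm_adj_le[OF sqint_diff[OF in_L2 \<open>sqint M g\<close>]] adj_diff[OF in_L2 \<open>sqint M g\<close>]
      by (simp add: T_def)
    then have "(\<lambda>n. T (h (r (q n))) - adj g) \<longlonglongrightarrow> 0"
      by (intro Lim_null_comparison[OF always_eventually tendsto_mult_right_zero[OF conv]]) blast
    then have lim: "(\<lambda>n. T (h (r (q n)))) \<longlonglongrightarrow> adj g"
      by (simp add: LIM_zero_iff)
    moreover have "weakly_tendsto (\<lambda>n. T (h (r (q n)))) 0"
      using weakly_tendsto_T[OF weakly_tendsto_subseq[OF weak_null strict_mono_o[OF r q]]]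
      by (simp add: T_0 o_def)
    ultimately have "adj g = 0"
      using weakly_tendsto_unique tendsto_imp_weakly_tendsto by blast
    with lim q show "\<exists>q. strict_mono q \<and> ((\<lambda>n. T (h n)) \<circ> r \<circ> q) \<longlonglongrightarrow> 0"
      by (auto simp: o_def)
  qed
  then have "(\<lambda>n. C * norm (T (h n))) \<longlonglongrightarrow> 0"
    by (intro tendsto_mult_right_zero tendsto_norm_zero)
  from tendsto_power[OF this, of 2] have lim: "(\<lambda>n. (C * norm (T (h n)))\<^sup>2) \<longlonglongrightarrow> 0"
    by simp
  have "norm (\<integral>s. (intop M k (emb feat (h n)) s)\<^sup>2 \<partial>M) \<le> (C * norm (T (h n)))\<^sup>2" for n
    unfolding integral_intop_sq real_norm_def abs_power2 by (rule power_mono[OF S_bound l2norm_nonneg])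
  then show ?thesis
    by (rule Lim_null_comparison[OF always_eventually, OF allI lim])
qed

lemma compact_S_if_intop_sq_tendsto_zero:
  assumes vanish: "\<And>h. bounded (range h) \<Longrightarrow> \<forall>s\<in>space M. (\<lambda>n. emb feat (h n) s) \<longlonglongrightarrow> 0
      \<Longrightarrow> (\<lambda>n. \<integral>s. (intop M k (emb feat (h n)) s)\<^sup>2 \<partial>M) \<longlonglongrightarrow> 0"
  shows "compact_S M feat"
  unfolding compact_S_def
proof (intro allI impI)
  fix h :: "nat \<Rightarrow> 'h" assume "bounded (range h)"
  then obtain B where B: "\<And>n. norm (h n) \<le> B"
    by (auto simp: bounded_iff)
  obtain r x where r: "strict_mono r" and wx: "weakly_tendsto (h \<circ> r) x"
    using bounded_imp_weakly_convergent_subseq \<open>bounded (range h)\<close> by blast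
  define d where "d n = h (r n) - x" for n
  have d_bound: "norm (d n) \<le> B + norm x" for n
    using B[of "r n"] norm_triangle_ineq4[of "h (r n)" x] unfolding d_def by linarith
  then have "bounded (range d)"
    unfolding bounded_iff by blast
  moreover have "\<forall>s\<in>space M. (\<lambda>n. emb feat (d n) s) \<longlonglongrightarrow> 0"
  proof
    fix s
    show "(\<lambda>n. emb feat (d n) s) \<longlonglongrightarrow> 0"
      using LIM_zero[OF weakly_tendsto_emb[OF wx, of feat s]] by (simp add: d_def emb_diff)
  qed
  ultimately have "(\<lambda>n. (l2norm M (emb feat (T (d n))))\<^sup>2) \<longlonglongrightarrow> 0"
    using vanish by (simp add: integral_intop_sq)
  then have STd: "(\<lambda>n. l2norm M (emb feat (T (d n)))) \<longlonglongrightarrow> 0"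
    by (intro tendsto_zero_if_square_le[OF l2norm_nonneg order_refl])
  have "(\<lambda>n. norm (T (d n))) \<longlonglongrightarrow> 0"
  proof (rule tendsto_zero_if_square_le)
    fix n
    have "l2norm M (emb feat (d n)) \<le> C * (B + norm x)"
      using order_trans[OF S_bound mult_left_mono[OF d_bound C_nonneg]] .
    then show "(norm (T (d n)))\<^sup>2 \<le> C * (B + norm x) * l2norm M (emb feat (T (d n)))"
      using norm_T_sq_le[of "d n"] mult_right_mono[OF _ l2norm_nonneg] order_trans by blast
  next
    show "(\<lambda>n. C * (B + norm x) * l2norm M (emb feat (T (d n)))) \<longlonglongrightarrow> 0"
      by (rule tendsto_mult_right_zero[OF STd])
  qed simp
  then have "(\<lambda>n. T ((h \<circ> r) n)) \<longlonglongrightarrow> T x"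
    by (simp add: d_def T_diff tendsto_norm_zero_iff LIM_zero_iff)
  moreover have "bounded (range (h \<circ> r))"
    by (rule bounded_subset[OF \<open>bounded (range h)\<close>]) auto
  ultimately have "l2_conv M (\<lambda>n. emb feat ((h \<circ> r) n))"
    using l2_conv_emb_if_T_tendsto by blast
  with r show "\<exists>r. strict_mono r \<and> l2_conv M (\<lambda>n. emb feat (h (r n)))"
    by auto
qed

end

theorem theorem1:
  fixes M :: "'a measure" and k :: "'a \<Rightarrow> 'a \<Rightarrow> real"
    and feat :: "'a \<Rightarrow> 'h::{real_inner, complete_space}"
  assumes nonempty: "space M \<noteq> {}"
    and kernel: "\<And>s t. s \<in> space M \<Longrightarrow> t \<in> space M \<Longrightarrow> k s t = emb feat (feat s) t"
    and inj_emb: "\<And>h. (\<forall>s\<in>space M. emb feat h s = 0) \<Longrightarrow> h = 0"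
    and sigma_fin: "sigma_finite_measure M"
    and in_L2: "\<And>h. sqint M (emb feat h)"
    and S_cont: "\<exists>C. \<forall>h. l2norm M (emb feat h) \<le> C * norm h"
  shows "(compact_S M feat \<longleftrightarrow> compact_THH M k feat)
       \<and> (compact_S M feat \<longleftrightarrow> compact_THL M k feat)
       \<and> (compact_S M feat \<longleftrightarrow> compact_TLL M k)
       \<and> (compact_S M feat \<longleftrightarrow>
           (\<forall>h::nat \<Rightarrow> 'h. bounded (range h) \<and>
               (\<forall>s\<in>space M. (\<lambda>n. emb feat (h n) s) \<longlonglongrightarrow> 0) \<longrightarrow>
               (\<lambda>n. \<integral>s. (intop M k (emb feat (h n)) s)\<^sup>2 \<partial>M) \<longlonglongrightarrow> 0))"
proof -
  obtain C where C: "\<And>h. l2norm M (emb feat h) \<le> C * norm h"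
    using S_cont by blast
  interpret rkhs_in_L2 M k feat "max C 0"
  proof
    show "l2norm M (emb feat h) \<le> max C 0 * norm h" for h
      using C[of h] mult_right_mono[OF max.cobounded1 norm_ge_zero] order_trans by blast
  qed (use kernel inj_emb in_L2 in auto)
  have "compact_S M feat \<Longrightarrow> compact_TLL M k"
    and "compact_TLL M k \<Longrightarrow> compact_THL M k feat"
    and "compact_THL M k feat \<Longrightarrow> compact_THH M k feat"
    and "compact_THH M k feat \<Longrightarrow> compact_S M feat"
    by (fact compact_S_imp_compact_TLL compact_TLL_imp_compact_THL
        compact_THL_imp_compact_THH compact_THH_imp_compact_S)+
  then show ?thesis
    using compact_S_imp_intop_sq_tendsto_zero compact_S_if_intop_sq_tendsto_zero by blast
qed

end
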